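(* Let $n\ge3$. For $i\ge -1$ let $\mathfrak{M}_i$ be the free $\mathbb{Z}$-module spanned by $\mathcal{N}_i$. Then each $\mathfrak{M}_i$ is a homogeneous subring of $\mathfrak{L}(n)$, and for every $i\ge 0$, \[\mathfrak{M}_i=N_{\mathfrak{L}(n)}(\mathfrak{M}_{i-1})=\mathfrak{N}_i.\]
   Context: Fix an integer $n\ge 3$. A partition is a sequence $\Lambda=(\lambda_j)_{j\ge1}$ of non-negative integers with finite support; $\mathrm{wt}(\Lambda)=\sum_j j\lambda_j$; $\mathrm{Part}(k)$ is the set of partitions with $\lambda_j=0$ for $j>k$. Write $x^\Lambda=\prod_j x_j^{\lambda_j}$, $\deg(x^\Lambda)=\sum_j\lambda_j$, and let $\partial_k$ be the partial derivative with respect to $x_k$. $\mathfrak{L}(n)$ is the free $\mathbb{Z}$-module with basis $\mathcal{B}=\{x^\Lambda\partial_k : 1\le k\le n,\ \Lambda\in\mathrm{Part}(k-1)\}$, a Lie ring with bracket defined on basis elements by $[x^\Lambda\partial_k,x^\Theta\partial_j]=\partial_j(x^\Lambda)x^\Theta\partial_k$ if $j<k$, $-x^\Lambda\partial_k(x^\Theta)\partial_j$ if $j>k$, $0$ if $j=k$, extended bilinearly. A Lie subring is homogeneous if it is the $\mathbb{Z}$-span of a subset of $\mathcal{B}$. For an integer $i\ge-1$, let $r_i\in\{1,\dots,n-1\}$ with $i\equiv r_i\pmod{n-1}$ and $h_i=\lfloor (i-1)/(n-1)\rfloor+1$ (so $i=(h_i-1)(n-1)+r_i$). For a basis element define $\mathrm{WD}(x^\Lambda\partial_k)=\mathrm{wt}(\Lambda)-\deg(x^\Lambda)+n-k$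 and $\mathrm{lev}_i(x^\Lambda\partial_k)=h_i\,\mathrm{WD}(x^\Lambda\partial_k)+\deg(x^\Lambda)-1$. For $i\ge -1$, $\mathcal{N}_i=\{b\in\mathcal{B} : \mathrm{lev}_j(b)\le j \text{ for some integer } j \text{ with } -1\le j\le i\}$. The idealizer of a subring $\mathfrak{M}$ is $N_{\mathfrak{L}(n)}(\mathfrak{M})=\{y\in\mathfrak{L}(n): [y,m]\in\mathfrak{M}\ \forall m\in\mathfrak{M}\}$. Define $\mathfrak{N}_{-1}=\mathbb{Z}\partial_1+\dots+\mathbb{Z}\partial_n$ and $\mathfrak{N}_i=N_{\mathfrak{L}(n)}(\mathfrak{N}_{i-1})$ for $i\ge0$. *)

theory Defs
  imports Main
begin

text \<open>Partitions are sequences indexed from 1 (index 0 is forced to be 0).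
  A basis element x^Lambda d_k is the pair (Lambda, k).
  Elements of L(n) are finitely supported integer-valued functions on the basis.\<close>

type_synonym part = "nat \<Rightarrow> nat"
type_synonym bas = "part \<times> nat"
type_synonym elt = "bas \<Rightarrow> int"

definition Part :: "nat \<Rightarrow> part set" where
  "Part k = {L. \<forall>j. (j = 0 \<or> j > k) \<longrightarrow> L j = 0}"

definition wt :: "part \<Rightarrow> nat" where
  "wt L = (\<Sum>j\<in>{j. L j \<noteq> 0}. j * L j)"

definition pdeg :: "part \<Rightarrow> nat" where
  "pdeg L = (\<Sum>j\<in>{j. L j \<noteq> 0}. L j)"

definition Bas :: "nat \<Rightarrow> bas set" where
  "Bas n = {(L, k). 1 \<le> k \<and> k \<le> n \<and> L \<in> Part (k - 1)}"

definition supp :: "elt \<Rightarrow> bas set" where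
  "supp f = {b. f b \<noteq> 0}"

definition Lring :: "nat \<Rightarrow> elt set" where
  "Lring n = {f. finite (supp f) \<and> supp f \<subseteq> Bas n}"

definition brb :: "bas \<Rightarrow> bas \<Rightarrow> int \<times> bas" where
  "brb b c = (case b of (L, k) \<Rightarrow> case c of (T, j) \<Rightarrow>
     if j < k then (int (L j), ((\<lambda>i. L i + T i)(j := L j - 1 + T j), k))
     else if k < j then (- int (T k), ((\<lambda>i. L i + T i)(k := L k + T k - 1), j))
     else (0, (L, k)))"

definition br :: "elt \<Rightarrow> elt \<Rightarrow> elt" where
  "br y z = (\<lambda>d. \<Sum>(b, c)\<in>supp y \<times> supp z.
      (if snd (brb b c) = d then y b * z c * fst (brb b c) else 0))"

definition span :: "nat \<Rightarrow> bas set \<Rightarrow> elt set" where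
  "span n S = {f \<in> Lring n. supp f \<subseteq> S}"

definition lie_subring :: "nat \<Rightarrow> elt set \<Rightarrow> bool" where
  "lie_subring n M \<longleftrightarrow> M \<subseteq> Lring n \<and> (\<lambda>_. 0) \<in> M \<and>
     (\<forall>x\<in>M. \<forall>y\<in>M. (\<lambda>b. x b + y b) \<in> M \<and> (\<lambda>b. - x b) \<in> M \<and> br x y \<in> M)"

definition homogeneous_subring :: "nat \<Rightarrow> elt set \<Rightarrow> bool" where
  "homogeneous_subring n M \<longleftrightarrow> lie_subring n M \<and> (\<exists>S \<subseteq> Bas n. M = span n S)"

definition idealizer :: "nat \<Rightarrow> elt set \<Rightarrow> elt set" where
  "idealizer n M = {y \<in> Lring n. \<forall>m\<in>M. br y m \<in> M}"

definition WD :: "nat \<Rightarrow> bas \<Rightarrow> int" where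
  "WD n b = int (wt (fst b)) - int (pdeg (fst b)) + int n - int (snd b)"

definition hh :: "nat \<Rightarrow> int \<Rightarrow> int" where
  "hh n i = (i - 1) div (int n - 1) + 1"

definition lev :: "nat \<Rightarrow> int \<Rightarrow> bas \<Rightarrow> int" where
  "lev n i b = hh n i * WD n b + int (pdeg (fst b)) - 1"

definition Ncal :: "nat \<Rightarrow> int \<Rightarrow> bas set" where
  "Ncal n i = {b \<in> Bas n. \<exists>j::int. -1 \<le> j \<and> j \<le> i \<and> lev n j b \<le> j}"

definition Mfrak :: "nat \<Rightarrow> int \<Rightarrow> elt set" where
  "Mfrak n i = span n (Ncal n i)"

fun Nrec :: "nat \<Rightarrow> nat \<Rightarrow> elt set" where
  "Nrec n 0 = span n {(\<lambda>_. 0, k) | k. 1 \<le> k \<and> k \<le> n}"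
| "Nrec n (Suc m) = idealizer n (Nrec n m)"

text \<open>Nfrak n i for i >= -1, with Nfrak n (-1) = Z d_1 + ... + Z d_n.\<close>
definition Nfrak :: "nat \<Rightarrow> int \<Rightarrow> elt set" where
  "Nfrak n i = Nrec n (nat (i + 1))"

end

theory Submission
  imports Defs
begin

(* A nonzero bracket of basis elements b, c is again a basis element, with weight defect
  WD b + WD c - (n - 1) and degree deg b + deg c - 1, and for fixed c it determines b. Hence a
  span of basis elements is a subring iff its basis set is closed under nonzero brackets, and the
  span of S idealizes the span of T iff nonzero brackets map S x T into T while every basis
  element outside S has a nonzero bracket with some element of T that leaves T.
  Membership in N_i depends only on W = WD and D = deg, through h_j W + D - 1 <= j, so for
  S = N_i and T = N_(i-1) these conditions become integer inequalities, which follow from the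
  block structure of j |-> h_j. A basis element outside N_i is pushed out of N_(i-1) by d_j,
  by d_1, or by x_1^(h_i - 1) x_(j-1) d_j. Since N_(-1) spans Z d_1 + ... + Z d_n, the spans
  of the N_i are the iterated idealizers. *)

section \<open>Monomials and the weight defect\<close>

lemma wt_eq_sum_atMost: "\<forall>t>K. L t = 0 \<Longrightarrow> wt L = (\<Sum>t\<le>K. t * L t)"
  unfolding wt_def by (rule sum.mono_neutral_left) (auto, metis leI neq0_conv)

lemma pdeg_eq_sum_atMost: "\<forall>t>K. L t = 0 \<Longrightarrow> pdeg L = (\<Sum>t\<le>K. L t)"
  unfolding pdeg_def by (rule sum.mono_neutral_left) (auto, metis leI neq0_conv)

lemma wt_pdeg_zero [simp]: "wt (\<lambda>_. 0) = 0" "pdeg (\<lambda>_. 0) = 0"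
  unfolding wt_def pdeg_def by simp_all

lemma mem_Bas_iff:
  "(L, k) \<in> Bas n \<longleftrightarrow> 1 \<le> k \<and> k \<le> n \<and> L 0 = 0 \<and> (\<forall>t\<ge>k. L t = 0)"
  unfolding Bas_def Part_def by auto

lemma Bas_vanish: "(L, k) \<in> Bas n \<Longrightarrow> \<forall>t>n. L t = 0"
  by (auto simp: mem_Bas_iff)

lemma pdeg_eq_0_iff:
  assumes "(L, k) \<in> Bas n" shows "pdeg L = 0 \<longleftrightarrow> L = (\<lambda>_. 0)"
proof
  assume "pdeg L = 0"
  with Bas_vanish[OF assms] have "\<forall>t\<le>n. L t = 0" by (simp add: pdeg_eq_sum_atMost[of n])
  with Bas_vanish[OF assms] show "L = (\<lambda>_. 0)" by (metis not_le)
qed simp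

lemma wt_eq_pdeg_add:
  assumes "(L, k) \<in> Bas n" shows "wt L = pdeg L + (\<Sum>t\<le>n. (t - 1) * L t)"
proof -
  have "t * L t = L t + (t - 1) * L t" for t
    using assms by (cases t) (auto simp: mem_Bas_iff)
  then show ?thesis
    using Bas_vanish[OF assms] by (simp add: wt_eq_sum_atMost[of n] pdeg_eq_sum_atMost[of n] sum.distrib)
qed

lemma WD_eq:
  assumes "(L, k) \<in> Bas n" shows "WD n (L, k) = int (wt L - pdeg L) + int (n - k)"
proof -
  have "pdeg L \<le> wt L" using wt_eq_pdeg_add[OF assms] by linarith
  with assms show ?thesis by (simp add: WD_def mem_Bas_iff of_nat_diff)
qed

lemma WD_nonneg: "b \<in> Bas n \<Longrightarrow> 0 \<le> WD n b"
  by (cases b) (simp add: WD_eq)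

lemma WD_eq_0_iff:
  assumes "(L, k) \<in> Bas n"
  shows "WD n (L, k) = 0 \<longleftrightarrow> k = n \<and> (\<forall>t. t \<noteq> 1 \<longrightarrow> L t = 0)"
proof -
  have "wt L - pdeg L = 0 \<longleftrightarrow> (\<forall>t\<le>n. (t - 1) * L t = 0)"
    using wt_eq_pdeg_add[OF assms] by auto
  also have "\<dots> \<longleftrightarrow> (\<forall>t. t \<noteq> 1 \<longrightarrow> L t = 0)"
  proof (intro iffI allI impI)
    fix t :: nat assume all: "\<forall>t\<le>n. (t - 1) * L t = 0" and "t \<noteq> 1"
    show "L t = 0"
    proof (cases "t \<le> n")
      case True
      with all have "(t - 1) * L t = 0" by blast
      with \<open>t \<noteq> 1\<close> assms show ?thesis by (cases t) (auto simp: mem_Bas_iff)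
    qed (use Bas_vanish[OF assms] in auto)
  next
    fix t :: nat assume "\<forall>t. t \<noteq> 1 \<longrightarrow> L t = 0"
    then show "(t - 1) * L t = 0" by (cases "t = 1") auto
  qed
  finally show ?thesis using assms by (auto simp: WD_eq mem_Bas_iff)
qed

lemma WD_le:
  assumes "(L, k) \<in> Bas n"
  shows "WD n (L, k) \<le> int n - int k + (int k - 2) * int (pdeg L)"
proof -
  have "(\<Sum>t\<le>n. t * L t) \<le> (\<Sum>t\<le>n. (k - 1) * L t)"
  proof (rule sum_mono)
    fix t show "t * L t \<le> (k - 1) * L t"
      using assms by (cases "k \<le> t") (auto simp: mem_Bas_iff)
  qed
  then have "wt L \<le> (k - 1) * pdeg L"
    using Bas_vanish[OF assms] by (simp add: wt_eq_sum_atMost[of n] pdeg_eq_sum_atMost[of n] sum_distrib_left)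
  then have "int (wt L) \<le> int (k - 1) * int (pdeg L)"
    by (metis of_nat_le_iff of_nat_mult)
  then show ?thesis using assms unfolding WD_def by (simp add: mem_Bas_iff of_nat_diff algebra_simps)
qed

lemma wt_pdeg_monomial:
  fixes a s :: nat
  defines "T \<equiv> \<lambda>t. (if t = 1 then a else 0) + (if t = s then 1 else 0)"
  shows "wt T = a + s" "pdeg T = a + 1"
proof -
  have vanish: "\<forall>t>s + 1. T t = 0" by (simp add: T_def)
  have "(\<Sum>t\<le>s + 1. t * T t) = (\<Sum>t\<le>s + 1. (if t = 1 then a else 0) + (if t = s then s else 0))"
    by (intro sum.cong) (auto simp: T_def)
  with vanish show "wt T = a + s" by (simp add: wt_eq_sum_atMost[of "s + 1"] sum.distrib)
  from vanish show "pdeg T = a + 1" by (simp add: pdeg_eq_sum_atMost[of "s + 1"] sum.distrib T_def)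
qed

section \<open>Brackets of basis elements\<close>

lemma brb_nonzero_shape:
  assumes "fst (brb (L, k) (T, j)) \<noteq> 0"
  obtains R where "k \<noteq> j" "snd (brb (L, k) (T, j)) = (R, max k j)"
    "\<And>t. R t + of_bool (t = min k j) = L t + T t"
proof (cases "j < k")
  case True
  with assms have "1 \<le> L j" by (simp add: brb_def)
  with True show ?thesis
    by (intro that[of "(\<lambda>i. L i + T i)(j := L j - 1 + T j)"]) (auto simp: brb_def)
next
  case False
  with assms have "k < j" "1 \<le> T k" by (auto simp: brb_def split: if_splits)
  then show ?thesis
    by (intro that[of "(\<lambda>i. L i + T i)(k := L k + T k - 1)"]) (auto simp: brb_def)
qed

text \<open>The exponent vector of \<open>x\<^sup>\<Lambda> \<partial>\<^sub>k\<close>, counting \<open>\<partial>\<^sub>k\<close> as \<open>x\<^sub>k\<^sup>-\<^sup>1\<close>.\<close>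

definition mdeg :: "bas \<Rightarrow> nat \<Rightarrow> int" where
  "mdeg b t = int (fst b t) - of_bool (t = snd b)"

lemma inj_on_mdeg: "inj_on mdeg (Bas n)"
proof (rule inj_onI)
  fix b b' assume "b \<in> Bas n" "b' \<in> Bas n" and eq: "mdeg b = mdeg b'"
  obtain L k L' k' where bb: "b = (L, k)" "b' = (L', k')" by fastforce
  have "L k = 0" "L' k' = 0" using \<open>b \<in> Bas n\<close> \<open>b' \<in> Bas n\<close> bb by (auto simp: mem_Bas_iff)
  moreover have "mdeg b k = mdeg b' k" using eq by simp
  ultimately have "k = k'" unfolding bb mdeg_def by (cases "k = k'") simp_all
  moreover have "int (L t) = int (L' t)" for t
    using fun_cong[OF eq, of t] \<open>k = k'\<close> unfolding bb mdeg_def by simp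
  ultimately show "b = b'" using bb by auto
qed

lemma brb_nonzero:
  assumes b: "b \<in> Bas n" and c: "c \<in> Bas n" and nz: "fst (brb b c) \<noteq> 0"
  shows "snd (brb b c) \<in> Bas n"
    and "WD n (snd (brb b c)) = WD n b + WD n c - (int n - 1)"
    and "int (pdeg (fst (snd (brb b c)))) = int (pdeg (fst b)) + int (pdeg (fst c)) - 1"
    and "mdeg (snd (brb b c)) = (\<lambda>t. mdeg b t + mdeg c t)"
proof -
  obtain L k T j where bc: "b = (L, k)" "c = (T, j)" by fastforce
  obtain R where "k \<noteq> j" and r: "snd (brb b c) = (R, max k j)"
    and R: "\<And>t. R t + of_bool (t = min k j) = L t + T t"
    using brb_nonzero_shape nz unfolding bc by metis
  have Lb: "1 \<le> k" "k \<le> n" "L 0 = 0" "\<forall>t\<ge>k. L t = 0" and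
    Tb: "1 \<le> j" "j \<le> n" "T 0 = 0" "\<forall>t\<ge>j. T t = 0"
    using b c unfolding bc mem_Bas_iff by auto
  have Rle: "R t \<le> L t + T t" for t using R[of t] by linarith
  have R_vanish: "R t = 0" if "t = 0 \<or> max k j \<le> t" for t
    using Rle[of t] Lb Tb that by auto
  then show "snd (brb b c) \<in> Bas n" using r Lb Tb by (simp add: mem_Bas_iff)
  have van: "\<forall>t>n. L t = 0" "\<forall>t>n. T t = 0" "\<forall>t>n. R t = 0"
    using Lb Tb R_vanish by auto
  have min_le: "{..n} \<inter> {t. t = min k j} = {min k j}" using Lb by auto
  have "wt L + wt T = (\<Sum>t\<le>n. t * (R t + of_bool (t = min k j)))"
    using van by (simp add: wt_eq_sum_atMost[of n] R sum.distrib algebra_simps)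
  also have "\<dots> = wt R + min k j"
    using van min_le by (simp add: wt_eq_sum_atMost[of n] sum.distrib distrib_left)
  finally have wt: "wt R + min k j = wt L + wt T" by simp
  have "pdeg L + pdeg T = (\<Sum>t\<le>n. R t + of_bool (t = min k j))"
    using van by (simp add: pdeg_eq_sum_atMost[of n] R sum.distrib)
  also have "\<dots> = pdeg R + 1"
    using van min_le by (simp add: pdeg_eq_sum_atMost[of n] sum.distrib)
  finally have pdeg: "pdeg R + 1 = pdeg L + pdeg T" by simp
  then show "int (pdeg (fst (snd (brb b c)))) = int (pdeg (fst b)) + int (pdeg (fst c)) - 1"
    using r bc by simp
  have "min k j + max k j = k + j" by simp
  then show "WD n (snd (brb b c)) = WD n b + WD n c - (int n - 1)"
    using wt pdeg r unfolding bc WD_def by simp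
  have "mdeg (R, max k j) t = mdeg (L, k) t + mdeg (T, j) t" for t
    using R[of t] \<open>k \<noteq> j\<close> Lb Tb unfolding mdeg_def by (cases "k \<le> j") (auto simp: max_def min_def)
  then show "mdeg (snd (brb b c)) = (\<lambda>t. mdeg b t + mdeg c t)"
    using r bc by auto
qed

lemma inj_on_brb:
  assumes c: "c \<in> Bas n"
  shows "inj_on (\<lambda>b. snd (brb b c)) {b \<in> Bas n. fst (brb b c) \<noteq> 0}"
proof (rule inj_onI)
  fix b b' assume b: "b \<in> {b \<in> Bas n. fst (brb b c) \<noteq> 0}" and b': "b' \<in> {b \<in> Bas n. fst (brb b c) \<noteq> 0}"
    and eq: "snd (brb b c) = snd (brb b' c)"
  then have "(\<lambda>t. mdeg b t + mdeg c t) = (\<lambda>t. mdeg b' t + mdeg c t)"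
    using brb_nonzero(4)[of b n c] brb_nonzero(4)[of b' n c] c by simp
  then have "mdeg b = mdeg b'" by (simp add: fun_eq_iff)
  then show "b = b'" by (rule inj_onD[OF inj_on_mdeg[of n]]) (use b b' in simp_all)
qed

lemma brb_nonzero_of_WD_0:
  assumes b: "b \<in> Bas n" and c: "c \<in> Bas n" and "WD n b = 0" and nz: "fst (brb b c) \<noteq> 0"
  shows "c = (\<lambda>_. 0, 1)"
proof -
  obtain L k T j where bc: "b = (L, k)" "c = (T, j)" by fastforce
  have "(L, k) \<in> Bas n" "WD n (L, k) = 0" using assms bc by simp_all
  then have "k = n" and L: "\<And>t. t \<noteq> 1 \<Longrightarrow> L t = 0"
    using WD_eq_0_iff by blast+
  have j: "1 \<le> j" "j \<le> n" "T 0 = 0" "\<forall>t\<ge>j. T t = 0"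
    using c unfolding bc by (auto simp: mem_Bas_iff)
  have "k \<noteq> j" using nz unfolding bc by (rule brb_nonzero_shape)
  with \<open>k = n\<close> j(2) have "j < k" by simp
  with nz have "L j \<noteq> 0" unfolding bc by (simp add: brb_def)
  with L have "j = 1" by (cases "j = 1") simp_all
  with j have "T t = 0" for t by (cases "t = 0") auto
  then have "T = (\<lambda>_. 0)" by auto
  with \<open>j = 1\<close> show ?thesis using bc by simp
qed

section \<open>Homogeneous spans and their idealizers\<close>

lemma mem_span_iff: "S \<subseteq> Bas n \<Longrightarrow> z \<in> span n S \<longleftrightarrow> finite (supp z) \<and> supp z \<subseteq> S"
  by (auto simp: span_def Lring_def)

lemma mem_supp_brE:
  assumes "d \<in> supp (br y z)"
  obtains b c where "b \<in> supp y" "c \<in> supp z" "fst (brb b c) \<noteq> 0" "snd (brb b c) = d"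
proof (rule ccontr)
  assume none: "\<not> thesis"
  have "br y z d = 0"
    unfolding br_def by (rule sum.neutral) (use that none in auto)
  with assms show False by (simp add: supp_def)
qed

lemma br_mem_span:
  assumes "S \<subseteq> Bas n" "T \<subseteq> Bas n"
    and closed: "\<And>b c. b \<in> S \<Longrightarrow> c \<in> T \<Longrightarrow> fst (brb b c) \<noteq> 0 \<Longrightarrow> snd (brb b c) \<in> U"
    and "y \<in> span n S" "z \<in> span n T"
  shows "br y z \<in> span n U"
proof -
  have y: "finite (supp y)" "supp y \<subseteq> S" and z: "finite (supp z)" "supp z \<subseteq> T"
    using assms(4,5) by (auto simp: span_def Lring_def)
  have "supp (br y z) \<subseteq> (\<lambda>(b, c). snd (brb b c)) ` (supp y \<times> supp z)"
    by (force elim: mem_supp_brE)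
  then have "finite (supp (br y z))"
    using y z by (auto intro: finite_subset)
  moreover have "supp (br y z) \<subseteq> U \<inter> Bas n"
  proof
    fix d assume "d \<in> supp (br y z)"
    then obtain b c where "b \<in> supp y" "c \<in> supp z" "fst (brb b c) \<noteq> 0" "snd (brb b c) = d"
      by (rule mem_supp_brE)
    then show "d \<in> U \<inter> Bas n"
      using closed[of b c] brb_nonzero(1)[of b n c] y z assms(1,2) by blast
  qed
  ultimately show ?thesis by (simp add: span_def Lring_def)
qed

definition basis_elt :: "bas \<Rightarrow> elt" where
  "basis_elt c x = of_bool (x = c)"

lemma supp_basis_elt [simp]: "supp (basis_elt c) = {c}"
  by (simp add: supp_def basis_elt_def)

lemma basis_elt_mem_span: "c \<in> S \<Longrightarrow> S \<subseteq> Bas n \<Longrightarrow> basis_elt c \<in> span n S"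
  by (auto simp: span_def Lring_def)

lemma br_basis_elt:
  "br y (basis_elt c) d = (\<Sum>b\<in>supp y. if snd (brb b c) = d then y b * fst (brb b c) else 0)"
proof -
  have "br y (basis_elt c) d =
      (\<Sum>b\<in>supp y. if snd (brb b c) = d then y b * basis_elt c c * fst (brb b c) else 0)"
    by (simp add: br_def sum.cartesian_product[symmetric])
  also have "\<dots> = (\<Sum>b\<in>supp y. if snd (brb b c) = d then y b * fst (brb b c) else 0)"
    by (rule sum.cong) (simp_all add: basis_elt_def)
  finally show ?thesis .
qed

lemma br_basis_elt_at:
  assumes y: "y \<in> Lring n" and c: "c \<in> Bas n" and b: "b \<in> supp y" and nz: "fst (brb b c) \<noteq> 0"
  shows "br y (basis_elt c) (snd (brb b c)) = y b * fst (brb b c)"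
proof -
  have fy: "finite (supp y)" "supp y \<subseteq> Bas n" using y by (auto simp: Lring_def)
  have unique: "b' = b" if "b' \<in> supp y" "fst (brb b' c) \<noteq> 0" "snd (brb b' c) = snd (brb b c)" for b'
    by (rule inj_onD[OF inj_on_brb[OF c]]) (use that fy b nz in auto)
  have "br y (basis_elt c) (snd (brb b c)) =
      (\<Sum>b'\<in>supp y. if snd (brb b' c) = snd (brb b c) then y b' * fst (brb b' c) else 0)"
    by (rule br_basis_elt)
  also have "\<dots> = y b * fst (brb b c)"
  proof -
    have "(if snd (brb b' c) = snd (brb b c) then y b' * fst (brb b' c) else 0) = 0"
      if "b' \<in> supp y - {b}" for b'
      using unique[of b'] that by auto
    then show ?thesis using fy(1) b by (simp add: sum.remove[of _ b])
  qed
  finally show ?thesis .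
qed

definition brb_escapes :: "bas \<Rightarrow> bas set \<Rightarrow> bool" where
  "brb_escapes b T \<longleftrightarrow> (\<exists>c\<in>T. fst (brb b c) \<noteq> 0 \<and> snd (brb b c) \<notin> T)"

lemma idealizer_span:
  assumes S: "S \<subseteq> Bas n" and T: "T \<subseteq> Bas n"
    and fwd: "\<And>b c. b \<in> S \<Longrightarrow> c \<in> T \<Longrightarrow> fst (brb b c) \<noteq> 0 \<Longrightarrow> snd (brb b c) \<in> T"
    and bwd: "\<And>b. b \<in> Bas n - S \<Longrightarrow> brb_escapes b T"
  shows "idealizer n (span n T) = span n S"
proof
  show "span n S \<subseteq> idealizer n (span n T)"
    using br_mem_span[OF S T fwd] by (auto simp: idealizer_def span_def)
next
  show "idealizer n (span n T) \<subseteq> span n S"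
  proof
    fix y assume "y \<in> idealizer n (span n T)"
    then have y: "y \<in> Lring n" and y_norm: "\<And>m. m \<in> span n T \<Longrightarrow> br y m \<in> span n T"
      by (auto simp: idealizer_def)
    have "b \<in> S" if b: "b \<in> supp y" for b
    proof (rule ccontr)
      assume "b \<notin> S"
      moreover have "b \<in> Bas n" using b y by (auto simp: Lring_def)
      ultimately obtain c where c: "c \<in> T" "fst (brb b c) \<noteq> 0" "snd (brb b c) \<notin> T"
        using bwd unfolding brb_escapes_def by blast
      have "c \<in> Bas n" using c(1) T by auto
      then have "br y (basis_elt c) (snd (brb b c)) \<noteq> 0"
        using br_basis_elt_at[OF y _ b c(2)] b c(2) by (simp add: supp_def)
      moreover have "supp (br y (basis_elt c)) \<subseteq> T"
        using y_norm[OF basis_elt_mem_span[OF c(1) T]] by (simp add: span_def)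
      ultimately show False using c(3) by (auto simp: supp_def)
    qed
    then show "y \<in> span n S" using y by (auto simp: span_def)
  qed
qed

lemma homogeneous_subring_span:
  assumes S: "S \<subseteq> Bas n"
    and closed: "\<And>b c. b \<in> S \<Longrightarrow> c \<in> S \<Longrightarrow> fst (brb b c) \<noteq> 0 \<Longrightarrow> snd (brb b c) \<in> S"
  shows "homogeneous_subring n (span n S)"
proof -
  have "(\<lambda>b. x b + y b) \<in> span n S" "(\<lambda>b. - x b) \<in> span n S"
    if "x \<in> span n S" "y \<in> span n S" for x y
  proof -
    have "supp (\<lambda>b. x b + y b) \<subseteq> supp x \<union> supp y" "supp (\<lambda>b. - x b) = supp x"
      by (auto simp: supp_def)
    then show "(\<lambda>b. x b + y b) \<in> span n S" "(\<lambda>b. - x b) \<in> span n S"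
      using that by (auto simp: mem_span_iff[OF S] intro: finite_subset)
  qed
  moreover have "(\<lambda>_. 0) \<in> span n S" by (simp add: span_def Lring_def supp_def)
  ultimately have "lie_subring n (span n S)"
    unfolding lie_subring_def using br_mem_span[OF S S closed] by (simp add: span_def)
  then show ?thesis using S by (auto simp: homogeneous_subring_def)
qed

section \<open>The level inequalities\<close>

definition lev_bounded :: "nat \<Rightarrow> int \<Rightarrow> int \<Rightarrow> int \<Rightarrow> bool" where
  "lev_bounded n i W D \<longleftrightarrow> (\<exists>j. -1 \<le> j \<and> j \<le> i \<and> hh n j * W + D - 1 \<le> j)"

lemma mem_Ncal_iff: "b \<in> Ncal n i \<longleftrightarrow> b \<in> Bas n \<and> lev_bounded n i (WD n b) (int (pdeg (fst b)))"
  by (simp add: Ncal_def lev_bounded_def lev_def)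

lemma lev_bounded_WD_0_iff: "-1 \<le> i \<Longrightarrow> lev_bounded n i 0 D \<longleftrightarrow> D \<le> i + 1"
  by (auto simp: lev_bounded_def intro: exI[of _ i])

context
  fixes n :: nat
  assumes n_ge_3: "3 \<le> n"
begin

abbreviation q :: int where "q \<equiv> int n - 1"

lemma le_hh_mult: "i \<le> hh n i * q"
proof -
  have "i - 1 = (i - 1) div q * q + (i - 1) mod q" by (rule div_mult_mod_eq[symmetric])
  moreover have "(i - 1) mod q < q" using n_ge_3 by simp
  ultimately show ?thesis by (simp add: hh_def algebra_simps)
qed

lemma hh_mult_less: "(hh n i - 1) * q < i"
proof -
  have "i - 1 = (i - 1) div q * q + (i - 1) mod q" by (rule div_mult_mod_eq[symmetric])
  moreover have "0 \<le> (i - 1) mod q" using n_ge_3 by simp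
  ultimately show ?thesis by (simp add: hh_def algebra_simps)
qed

lemma hh_mono: "j \<le> i \<Longrightarrow> hh n j \<le> hh n i"
  using n_ge_3 by (simp add: hh_def zdiv_mono1)

lemma hh_eqI:
  assumes "(h - 1) * q < i" "i \<le> h * q"
  shows "hh n i = h"
proof -
  have "(hh n i - 1) * q < h * q" "(h - 1) * q < hh n i * q"
    using assms le_hh_mult[of i] hh_mult_less[of i] by linarith+
  then show ?thesis using n_ge_3 by (simp add: mult_less_cancel_right)
qed

lemma hh_neg1 [simp]: "hh n (-1) = 0" and hh_0 [simp]: "hh n 0 = 0"
  using n_ge_3 by (auto intro: hh_eqI)

lemma hh_nonneg: "-1 \<le> i \<Longrightarrow> 0 \<le> hh n i"
  using hh_mono[of "-1" i] by simp

lemma hh_pos: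
  assumes "1 \<le> i" shows "1 \<le> hh n i"
proof (rule ccontr)
  assume "\<not> 1 \<le> hh n i"
  then have "hh n i * q \<le> 0" using n_ge_3 by (intro mult_nonpos_nonneg) auto
  with le_hh_mult[of i] assms show False by linarith
qed

lemma lev_bounded_neg1_iff: "lev_bounded n (-1) W D \<longleftrightarrow> D \<le> 0"
  by (auto simp: lev_bounded_def)

lemma lev_bounded_of_le_1: "0 \<le> i \<Longrightarrow> D \<le> 1 \<Longrightarrow> lev_bounded n i W D"
  by (auto simp: lev_bounded_def intro!: exI[of _ 0])

lemma lev_bounded_WD_less:
  assumes "lev_bounded n i W D" "2 \<le> D"
  shows "W < q"
proof -
  obtain j where j: "-1 \<le> j" "hh n j * W + D - 1 \<le> j"
    using assms(1) by (auto simp: lev_bounded_def)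
  have "0 < hh n j"
    using j assms(2) hh_nonneg[OF j(1)] le_hh_mult[of j] by (cases "hh n j = 0") auto
  moreover have "hh n j * W < hh n j * q"
    using j assms(2) le_hh_mult[of j] by linarith
  ultimately show ?thesis by simp
qed

lemma lev_bounded_hh_bound:
  assumes "lev_bounded n i W D" "W \<le> q"
  shows "hh n i * (W - q) + D \<le> 1"
proof -
  obtain j where j: "-1 \<le> j" "j \<le> i" "hh n j * W + D - 1 \<le> j"
    using assms(1) by (auto simp: lev_bounded_def)
  have "hh n i * (W - q) \<le> hh n j * (W - q)"
    using hh_mono[OF j(2)] assms(2) by (simp add: mult_right_mono_neg)
  then show ?thesis
    using j(3) le_hh_mult[of j] by (simp add: right_diff_distrib)
qed

lemma lev_bounded_hh_bound_strict:
  assumes "lev_bounded n i W D" "W \<le> q" "W = q \<Longrightarrow> D \<noteq> 1" "i < hh n i * q"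
  shows "hh n i * (W - q) + D \<le> 0"
proof -
  obtain j where j: "-1 \<le> j" "j \<le> i" "hh n j * W + D - 1 \<le> j"
    using assms(1) by (auto simp: lev_bounded_def)
  have j_le: "j \<le> hh n j * q" by (rule le_hh_mult)
  consider "hh n j = hh n i" | "hh n j < hh n i" using hh_mono[OF j(2)] by linarith
  then show ?thesis
  proof cases
    case 1
    then show ?thesis using j assms(4) by (simp add: right_diff_distrib)
  next
    case 2
    show ?thesis
    proof (cases "W = q")
      case True
      then show ?thesis using j(3) j_le assms(3) by simp
    next
      case False
      have "(hh n i - hh n j) * (W - q) \<le> W - q"
        using mult_right_mono_neg[of 1 "hh n i - hh n j" "W - q"] 2 assms(2) by simp
      then have "(hh n i - hh n j) * (W - q) \<le> -1" using False assms(2) by linarith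
      then show ?thesis using j(3) j_le by (simp add: algebra_simps)
    qed
  qed
qed

lemma lev_bounded_add_at:
  assumes "-1 \<le> j" "j \<le> i" "hh n j * W1 + D1 - 1 \<le> j" "lev_bounded n j W2 D2" "W2 \<le> q"
  shows "lev_bounded n i (W1 + W2 - q) (D1 + D2 - 1)"
proof -
  have "hh n j * (W2 - q) + D2 \<le> 1" using assms(4,5) by (rule lev_bounded_hh_bound)
  then have "hh n j * (W1 + W2 - q) + (D1 + D2 - 1) - 1 \<le> j"
    using assms(3) by (simp add: algebra_simps)
  then show ?thesis using assms(1,2) by (auto simp: lev_bounded_def)
qed

lemma lev_bounded_add:
  assumes "lev_bounded n i W1 D1" "lev_bounded n i W2 D2" "W1 \<le> q" "W2 \<le> q"
  shows "lev_bounded n i (W1 + W2 - q) (D1 + D2 - 1)"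
proof -
  obtain j1 where j1: "-1 \<le> j1" "j1 \<le> i" "hh n j1 * W1 + D1 - 1 \<le> j1"
    using assms(1) by (auto simp: lev_bounded_def)
  obtain j2 where j2: "-1 \<le> j2" "j2 \<le> i" "hh n j2 * W2 + D2 - 1 \<le> j2"
    using assms(2) by (auto simp: lev_bounded_def)
  show ?thesis
  proof (cases "j2 \<le> j1")
    case True
    then have "lev_bounded n j1 W2 D2" using j2 by (auto simp: lev_bounded_def)
    then show ?thesis using lev_bounded_add_at[OF j1 _ assms(4)] by simp
  next
    case False
    then have "lev_bounded n j2 W1 D1" using j1 by (auto simp: lev_bounded_def)
    then show ?thesis using lev_bounded_add_at[OF j2 _ assms(3)] by (simp add: ac_simps)
  qed
qed

lemma lev_bounded_pred_slack:
  assumes c: "lev_bounded n (i - 1) W2 D2" and W2: "W2 \<le> q" "W2 = q \<Longrightarrow> D2 \<noteq> 1"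
    and W1: "0 \<le> W1" "W1 = 0 \<Longrightarrow> W2 = q \<and> D2 = 0"
  shows "hh n (i - 1) * (W2 - q) + D2 \<le> (hh n i - hh n (i - 1)) * W1"
proof (cases "hh n (i - 1) = hh n i")
  case True
  have "i - 1 < hh n (i - 1) * q" using le_hh_mult[of i] True by simp
  then show ?thesis using lev_bounded_hh_bound_strict[OF c W2] True by simp
next
  case False
  then have "hh n (i - 1) < hh n i" using hh_mono[of "i - 1" i] by simp
  have bound: "hh n (i - 1) * (W2 - q) + D2 \<le> 1"
    using c W2(1) by (rule lev_bounded_hh_bound)
  show ?thesis
  proof (cases "W1 = 0")
    case False
    then have "1 * 1 \<le> (hh n i - hh n (i - 1)) * W1"
      using \<open>hh n (i - 1) < hh n i\<close> W1(1) by (intro mult_mono) auto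
    then show ?thesis using bound by linarith
  qed (use W1 in simp)
qed

text \<open>For basis elements the side conditions on \<open>W2\<close> and \<open>W1 = 0\<close> hold automatically:
  WD \<open>n - 1\<close> forces degree 0, and only \<open>\<partial>\<^sub>1\<close> has a nonzero bracket with an element of WD 0.\<close>

lemma lev_bounded_add_pred:
  assumes "0 \<le> i" and b: "lev_bounded n i W1 D1" and c: "lev_bounded n (i - 1) W2 D2"
    and W1: "0 \<le> W1" "W1 \<le> q" and W2: "W2 \<le> q" "W2 = q \<Longrightarrow> D2 \<noteq> 1"
    and W1_0: "W1 = 0 \<Longrightarrow> W2 = q \<and> D2 = 0"
  shows "lev_bounded n (i - 1) (W1 + W2 - q) (D1 + D2 - 1)"
proof -
  obtain j where j: "-1 \<le> j" "j \<le> i" "hh n j * W1 + D1 - 1 \<le> j"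
    using b by (auto simp: lev_bounded_def)
  show ?thesis
  proof (cases "j \<le> i - 1")
    case True
    then have "lev_bounded n (i - 1) W1 D1" using j by (auto simp: lev_bounded_def)
    then show ?thesis using lev_bounded_add c W1 W2 by blast
  next
    case False
    then have "hh n i * W1 + D1 - 1 \<le> i" using j by simp
    moreover have "hh n (i - 1) * (W2 - q) + D2 \<le> (hh n i - hh n (i - 1)) * W1"
      using c W2 W1(1) W1_0 by (rule lev_bounded_pred_slack)
    ultimately have "hh n (i - 1) * (W1 + W2 - q) + (D1 + D2 - 1) - 1 \<le> i - 1"
      by (simp add: algebra_simps)
    then show ?thesis using \<open>0 \<le> i\<close> by (auto simp: lev_bounded_def intro!: exI[of _ "i - 1"])
  qed
qed

lemma not_lev_bounded_pred:
  assumes "1 \<le> i" "\<not> lev_bounded n i W D"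
  shows "\<not> lev_bounded n (i - 1) (W - 1) (D + hh n i - 1)"
proof
  assume "lev_bounded n (i - 1) (W - 1) (D + hh n i - 1)"
  then obtain j where j: "-1 \<le> j" "j \<le> i - 1" "hh n j * (W - 1) + (D + hh n i - 1) - 1 \<le> j"
    by (auto simp: lev_bounded_def)
  consider "hh n j < hh n i" | "hh n j = hh n i" using hh_mono[of j i] j(2) by linarith
  then have "lev_bounded n i W D"
  proof cases
    case 1
    then have "hh n j * W + D - 1 \<le> j" using j(3) by (simp add: algebra_simps)
    then show ?thesis using j by (auto simp: lev_bounded_def)
  next
    case 2
    moreover have "hh n j \<le> hh n (j + 1)" "hh n (j + 1) \<le> hh n i" using j(2) by (simp_all add: hh_mono)
    ultimately have "hh n (j + 1) * W + D - 1 \<le> j + 1" using j(3) by (simp add: algebra_simps)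
    then show ?thesis using j by (auto simp: lev_bounded_def intro!: exI[of _ "j + 1"])
  qed
  with assms(2) show False by simp
qed

lemma lev_bounded_pred_hh:
  assumes "1 \<le> i" shows "lev_bounded n (i - 1) (q - 1) (hh n i)"
proof -
  define h where "h = hh n i"
  have "1 \<le> h" unfolding h_def using assms by (rule hh_pos)
  have "hh n ((h - 1) * q) = h - 1" using n_ge_3 by (intro hh_eqI) (auto simp: algebra_simps)
  then have "hh n ((h - 1) * q) * (q - 1) + h - 1 \<le> (h - 1) * q"
    by (subst \<open>hh n ((h - 1) * q) = h - 1\<close>) (simp add: algebra_simps)
  moreover have "(h - 1) * q < i" unfolding h_def by (rule hh_mult_less)
  moreover have "0 \<le> (h - 1) * q" using \<open>1 \<le> h\<close> n_ge_3 by simp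
  ultimately show ?thesis
    unfolding lev_bounded_def h_def[symmetric] by (intro exI[of _ "(h - 1) * q"]) auto
qed

section \<open>The sets \<open>N\<^sub>i\<close>\<close>

lemma WD_le_of_mem_Ncal:
  assumes "b \<in> Ncal n i" shows "WD n b \<le> q"
proof (cases "2 \<le> pdeg (fst b)")
  case True
  then show ?thesis using lev_bounded_WD_less assms by (force simp: mem_Ncal_iff)
next
  case False
  obtain L k where "b = (L, k)" by fastforce
  with assms False have b: "(L, k) \<in> Bas n" "pdeg L = 0 \<or> pdeg L = 1"
    by (auto simp: mem_Ncal_iff)
  then show ?thesis using WD_le[OF b(1)] \<open>b = (L, k)\<close> by (auto simp: mem_Bas_iff)
qed

lemma brb_mem_Ncal:
  assumes b: "b \<in> Ncal n i" and c: "c \<in> Ncal n i" and nz: "fst (brb b c) \<noteq> 0"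
  shows "snd (brb b c) \<in> Ncal n i"
proof -
  have "b \<in> Bas n" "c \<in> Bas n" using b c by (simp_all add: mem_Ncal_iff)
  note brb = brb_nonzero[OF this nz]
  have "lev_bounded n i (WD n b + WD n c - q) (int (pdeg (fst b)) + int (pdeg (fst c)) - 1)"
    using b c WD_le_of_mem_Ncal[OF b] WD_le_of_mem_Ncal[OF c]
    by (intro lev_bounded_add) (auto simp: mem_Ncal_iff)
  then show ?thesis using brb by (simp add: mem_Ncal_iff)
qed

lemma brb_mem_Ncal_pred:
  assumes "0 \<le> i" and b: "b \<in> Ncal n i" and c: "c \<in> Ncal n (i - 1)" and nz: "fst (brb b c) \<noteq> 0"
  shows "snd (brb b c) \<in> Ncal n (i - 1)"
proof -
  have bc: "b \<in> Bas n" "c \<in> Bas n" using b c by (simp_all add: mem_Ncal_iff)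
  note brb = brb_nonzero[OF bc nz]
  have "c = (\<lambda>_. 0, 1)" if "WD n b = 0"
    using brb_nonzero_of_WD_0[OF bc that nz] .
  then have c_WD_0: "WD n c = q \<and> int (pdeg (fst c)) = 0" if "WD n b = 0"
    using that by (simp add: WD_def)
  have "pdeg (fst c) \<noteq> 1" if "WD n c = q"
    using WD_le[of "fst c" "snd c" n] bc(2) that by (auto simp: mem_Bas_iff)
  then have "lev_bounded n (i - 1) (WD n b + WD n c - q)
      (int (pdeg (fst b)) + int (pdeg (fst c)) - 1)"
    using assms bc c_WD_0 WD_nonneg[OF bc(1)] WD_le_of_mem_Ncal[OF b] WD_le_of_mem_Ncal[OF c]
    by (intro lev_bounded_add_pred) (auto simp: mem_Ncal_iff)
  then show ?thesis using brb by (simp add: mem_Ncal_iff)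
qed

lemma brb_escapes_Ncal_neg1:
  assumes b: "(L, k) \<in> Bas n" and "2 \<le> pdeg L"
  shows "brb_escapes (L, k) (Ncal n (-1))"
proof -
  have "L \<noteq> (\<lambda>_. 0)" using assms by auto
  then obtain j where "L j \<noteq> 0" by auto
  with b have j: "1 \<le> j" "j < k" by (auto simp: mem_Bas_iff not_less_eq_eq intro: ccontr)
  let ?c = "(\<lambda>_. 0, j)"
  have c: "?c \<in> Bas n" using j b by (simp add: mem_Bas_iff)
  then have "?c \<in> Ncal n (-1)" by (simp add: mem_Ncal_iff lev_bounded_neg1_iff)
  moreover have nz: "fst (brb (L, k) ?c) \<noteq> 0" using \<open>L j \<noteq> 0\<close> j by (simp add: brb_def)
  moreover have "snd (brb (L, k) ?c) \<notin> Ncal n (-1)"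
    using brb_nonzero(3)[OF b c nz] assms by (simp add: mem_Ncal_iff lev_bounded_neg1_iff)
  ultimately show ?thesis unfolding brb_escapes_def by blast
qed

lemma brb_escapes_Ncal_pred_of_WD_0:
  fixes i :: int
  assumes "1 \<le> i" and b: "(L, k) \<in> Bas n" and W: "WD n (L, k) = 0" and D: "i + 1 < int (pdeg L)"
  shows "brb_escapes (L, k) (Ncal n (i - 1))"
proof -
  have "k = n" and L: "\<And>t. t \<noteq> 1 \<Longrightarrow> L t = 0" using WD_eq_0_iff[OF b] W by blast+
  have "L 1 \<noteq> 0"
  proof
    assume "L 1 = 0"
    with L have "L t = 0" for t by (cases "t = 1") simp_all
    then have "L = (\<lambda>_. 0)" by auto
    with D \<open>1 \<le> i\<close> show False by simp
  qed
  let ?c = "(\<lambda>_. 0, 1::nat)"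
  have c: "?c \<in> Bas n" using n_ge_3 by (simp add: mem_Bas_iff)
  then have "?c \<in> Ncal n (i - 1)" using \<open>1 \<le> i\<close> by (simp add: mem_Ncal_iff lev_bounded_of_le_1)
  moreover have nz: "fst (brb (L, k) ?c) \<noteq> 0" using \<open>L 1 \<noteq> 0\<close> \<open>k = n\<close> n_ge_3 by (simp add: brb_def)
  moreover have "WD n (snd (brb (L, k) ?c)) = 0"
    using brb_nonzero(2)[OF b c nz] W by (simp add: WD_def)
  then have "snd (brb (L, k) ?c) \<notin> Ncal n (i - 1)"
    using brb_nonzero(3)[OF b c nz] D \<open>1 \<le> i\<close> by (simp add: mem_Ncal_iff lev_bounded_WD_0_iff)
  ultimately show ?thesis unfolding brb_escapes_def by blast
qed

lemma brb_escapes_Ncal_pred_of_WD_pos: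
  fixes i :: int
  assumes "1 \<le> i" and b: "(L, k) \<in> Bas n" and W: "WD n (L, k) \<noteq> 0"
    and not_N: "\<not> lev_bounded n i (WD n (L, k)) (int (pdeg L))"
  shows "brb_escapes (L, k) (Ncal n (i - 1))"
proof -
  obtain j where j: "2 \<le> j" "j \<le> n" "(j < k \<and> L j \<noteq> 0) \<or> j = k + 1"
  proof (cases "k < n")
    case True
    then show ?thesis using that[of "k + 1"] b by (simp add: mem_Bas_iff)
  next
    case False
    with b have "k = n" by (simp add: mem_Bas_iff)
    with WD_eq_0_iff[OF b] W obtain t where "t \<noteq> 1" "L t \<noteq> 0" by blast
    moreover have "t \<noteq> 0" "t < k"
      using b \<open>L t \<noteq> 0\<close> unfolding mem_Bas_iff by (metis, meson leI)
    ultimately show ?thesis using that[of t] \<open>k = n\<close> by simp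
  qed
  define h where "h = hh n i"
  \<comment> \<open>the witness \<open>x\<^sub>1\<^sup>h\<^sup>-\<^sup>1 x\<^sub>j\<^sub>-\<^sub>1 \<partial>\<^sub>j\<close>, with WD \<open>n - 2\<close> and degree \<open>h\<close>\<close>
  define T where "T = (\<lambda>t. (if t = 1 then nat (h - 1) else 0) + (if t = j - 1 then 1 else 0))"
  have "1 \<le> h" using hh_pos[OF \<open>1 \<le> i\<close>] by (simp add: h_def)
  have c: "(T, j) \<in> Bas n" using j by (simp add: mem_Bas_iff T_def)
  have "WD n (T, j) = int n - 2" "int (pdeg T) = h"
    using wt_pdeg_monomial[of "nat (h - 1)" "j - 1"] j \<open>1 \<le> h\<close> by (simp_all add: T_def WD_def)
  then have "(T, j) \<in> Ncal n (i - 1)"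
    using c lev_bounded_pred_hh[OF \<open>1 \<le> i\<close>] by (simp add: mem_Ncal_iff h_def)
  moreover have nz: "fst (brb (L, k) (T, j)) \<noteq> 0" using j by (auto simp: brb_def T_def)
  moreover have "WD n (snd (brb (L, k) (T, j))) = WD n (L, k) - 1"
    "int (pdeg (fst (snd (brb (L, k) (T, j))))) = int (pdeg L) + h - 1"
    using brb_nonzero(2,3)[OF b c nz] \<open>WD n (T, j) = int n - 2\<close> \<open>int (pdeg T) = h\<close> by simp_all
  then have "snd (brb (L, k) (T, j)) \<notin> Ncal n (i - 1)"
    using not_lev_bounded_pred[OF \<open>1 \<le> i\<close> not_N] by (simp add: mem_Ncal_iff h_def)
  ultimately show ?thesis unfolding brb_escapes_def by blast
qed

lemma brb_escapes_Ncal_pred: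
  assumes "0 \<le> i" and b: "b \<in> Bas n - Ncal n i"
  shows "brb_escapes b (Ncal n (i - 1))"
proof -
  obtain L k where b_eq: "b = (L, k)" by fastforce
  have bB: "(L, k) \<in> Bas n" and not_N: "\<not> lev_bounded n i (WD n (L, k)) (int (pdeg L))"
    using b b_eq by (auto simp: mem_Ncal_iff)
  have "2 \<le> pdeg L"
    using lev_bounded_of_le_1[OF \<open>0 \<le> i\<close>, of "int (pdeg L)" "WD n (L, k)"] not_N
    by linarith
  consider "i = 0" | "1 \<le> i" "WD n (L, k) = 0" | "1 \<le> i" "WD n (L, k) \<noteq> 0"
    using \<open>0 \<le> i\<close> by linarith
  then show ?thesis
  proof cases
    case 1
    then show ?thesis using brb_escapes_Ncal_neg1[OF bB \<open>2 \<le> pdeg L\<close>] b_eq by simp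
  next
    case 2
    then have "i + 1 < int (pdeg L)" using not_N by (simp add: lev_bounded_WD_0_iff)
    then show ?thesis using brb_escapes_Ncal_pred_of_WD_0[OF \<open>1 \<le> i\<close> bB \<open>WD n (L, k) = 0\<close>] b_eq by simp
  next
    case 3
    then show ?thesis using brb_escapes_Ncal_pred_of_WD_pos[OF _ bB _ not_N] b_eq by simp
  qed
qed

lemma Ncal_neg1: "Ncal n (-1) = {(\<lambda>_. 0, k) | k. 1 \<le> k \<and> k \<le> n}"
proof (intro set_eqI iffI)
  fix b assume b: "b \<in> Ncal n (-1)"
  obtain L k where b_eq: "b = (L, k)" by fastforce
  with b have "(L, k) \<in> Bas n" "pdeg L = 0" by (auto simp: mem_Ncal_iff lev_bounded_neg1_iff)
  then show "b \<in> {(\<lambda>_. 0, k) | k. 1 \<le> k \<and> k \<le> n}"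
    using b_eq pdeg_eq_0_iff by (auto simp: mem_Bas_iff)
qed (auto simp: mem_Ncal_iff mem_Bas_iff lev_bounded_neg1_iff)

lemma homogeneous_subring_Mfrak: "homogeneous_subring n (Mfrak n i)"
  unfolding Mfrak_def using brb_mem_Ncal by (intro homogeneous_subring_span) (auto simp: mem_Ncal_iff)

lemma idealizer_Mfrak_pred: "0 \<le> i \<Longrightarrow> idealizer n (Mfrak n (i - 1)) = Mfrak n i"
  unfolding Mfrak_def using brb_mem_Ncal_pred brb_escapes_Ncal_pred
  by (intro idealizer_span) (auto simp: mem_Ncal_iff)

lemma Nrec_eq_Mfrak: "Nrec n m = Mfrak n (int m - 1)"
proof (induction m)
  case 0
  then show ?case by (simp add: Mfrak_def Ncal_neg1)
next
  case (Suc m)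
  then show ?case using idealizer_Mfrak_pred[of "int m"] by simp
qed

end

theorem theorem3p4:
  fixes n :: nat
  assumes "n \<ge> 3"
  shows "(\<forall>i::int. i \<ge> -1 \<longrightarrow> homogeneous_subring n (Mfrak n i)) \<and>
         (\<forall>i::int. i \<ge> 0 \<longrightarrow>
            Mfrak n i = idealizer n (Mfrak n (i - 1)) \<and>
            idealizer n (Mfrak n (i - 1)) = Nfrak n i)"
proof (intro conjI allI impI)
  fix i :: int
  show "homogeneous_subring n (Mfrak n i)" using assms by (rule homogeneous_subring_Mfrak)
next
  fix i :: int assume "0 \<le> i"
  then have "idealizer n (Mfrak n (i - 1)) = Mfrak n i" using assms by (simp add: idealizer_Mfrak_pred)
  moreover have "Nfrak n i = Mfrak n i"
    using Nrec_eq_Mfrak[OF assms, of "nat (i + 1)"] \<open>0 \<le> i\<close> by (simp add: Nfrak_def)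
  ultimately show "Mfrak n i = idealizer n (Mfrak n (i - 1))"
    "idealizer n (Mfrak n (i - 1)) = Nfrak n i" by simp_all
qed

end
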